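(* Let $b_j\in\{-1,1\}$, $a_j\in\mathbb{R}^n$ for $j\in[q]$, $K\in\{0,\ldots,n-1\}$, $\gamma>0$, and let $x^*$ be a d-stationary point of $$\min_{x\in\mathbb{R}^n}\ \sum_{j\in[q]}\log\big(1+\exp(-b_ja_j^\top x)\big)+\gamma T_{K,n,1}(x).$$ If $\gamma>\sum_{j\in[q]}\|a_j\|_\infty$, then $T_{K,n,1}(x^* )=0$, i.e., $x^*$ has at most $K$ nonzero entries.
   Context: $T_{K,n,1}(x)$ is the sum of the $n-K$ smallest values among $|x_1|,\ldots,|x_n|$. A point is d-stationary if the directional derivative of the objective there is $\ge0$ in every direction. *)

theory Defs
  imports "HOL-Analysis.Analysis" "HOL-Library.Multiset"
begin

definition trimmed_l1 :: "nat \<Rightarrow> real^'n \<Rightarrow> real" where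
  "trimmed_l1 K x = sum_list (take (CARD('n) - K)
      (sorted_list_of_multiset (image_mset (\<lambda>i. \<bar>x $ i\<bar>) (mset_set (UNIV :: 'n set)))))"

definition has_dir_deriv :: "(real^'n \<Rightarrow> real) \<Rightarrow> real^'n \<Rightarrow> real^'n \<Rightarrow> real \<Rightarrow> bool" where
  "has_dir_deriv f x d L \<longleftrightarrow> ((\<lambda>t. (f (x + t *\<^sub>R d) - f x) / t) \<longlongrightarrow> L) (at_right 0)"

definition d_stationary :: "(real^'n \<Rightarrow> real) \<Rightarrow> real^'n \<Rightarrow> bool" where
  "d_stationary f x \<longleftrightarrow> (\<forall>d. \<exists>L. has_dir_deriv f x d L \<and> L \<ge> 0)"

end

theory Submission
  imports Defs
begin

text \<open>If x* had more than K nonzero entries, its smallest nonzero absolute value |x*_i| would be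
  among the n - K smallest ones. Moving x*_i towards 0 by t < |x*_i| keeps the sorted order of the
  absolute values, so T_{K,n,1} drops by exactly t, while the logistic loss, being 1-Lipschitz in
  each margin b_j a_j^T x, rises by at most t \<Sum>_j |(a_j)_i| \<le> t \<Sum>_j ||a_j||_\<infinity>.
  The directional derivative in this direction is then at most \<Sum>_j ||a_j||_\<infinity> - \<gamma> < 0.
  Once at most K entries are nonzero, the n - K smallest absolute values all vanish.\<close>

lemma sorted_nth_eq_lower_bound_iff:
  fixes s :: "'a::linorder list"
  assumes "sorted s" "\<forall>u\<in>set s. a \<le> u" "k < length s"
  shows "s ! k = a \<longleftrightarrow> k < count_list s a"
  using assms
proof (induction s arbitrary: k)
  case Nil
  then show ?case by simp
next
  case (Cons u s)
  show ?case
  proof (cases "u = a")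
    case True
    then show ?thesis using Cons by (cases k) auto
  next
    case False
    then have "\<forall>w\<in>set (u # s). a < w" using Cons.prems(1,2) by fastforce
    moreover have "(u # s) ! k \<in> set (u # s)"
      using Cons.prems(3) by (rule nth_mem)
    ultimately show ?thesis by (auto simp: count_list_0_iff)
  qed
qed

lemma sorted_list_update:
  fixes s :: "'a::linorder list"
  assumes "sorted s" "\<forall>k<z. s ! k \<le> w" "w \<le> s ! z"
  shows "sorted (s[z := w])"
  unfolding sorted_iff_nth_mono
proof (intro allI impI)
  fix i j assume ij: "i \<le> j" "j < length (s[z := w])"
  then have "s ! i \<le> s ! j" using assms(1) by (simp add: sorted_nth_mono)
  moreover have "w \<le> s ! j" if "z \<le> j"
    using assms(3) sorted_nth_mono[OF assms(1) that] ij(2) by (auto intro: order_trans)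
  ultimately show "s[z := w] ! i \<le> s[z := w] ! j"
    using ij assms(2) by (cases "i = z"; cases "j = z") (auto simp: nth_list_update)
qed

lemma sum_list_list_update:
  fixes s :: "'a::ab_group_add list"
  shows "z < length s \<Longrightarrow> sum_list (s[z := w]) = sum_list s + w - s ! z"
  by (induction s arbitrary: z) (auto split: nat.split)

definition abs_mset :: "real^'n \<Rightarrow> real multiset" where
  "abs_mset x = image_mset (\<lambda>i. \<bar>x $ i\<bar>) (mset_set UNIV)"

definition sorted_abs :: "real^'n \<Rightarrow> real list" where
  "sorted_abs x = sorted_list_of_multiset (abs_mset x)"

lemma trimmed_l1_sorted_abs:
  fixes x :: "real^'n"
  shows "trimmed_l1 K x = sum_list (take (CARD('n) - K) (sorted_abs x))"
  unfolding trimmed_l1_def sorted_abs_def abs_mset_def ..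

lemma sorted_sorted_abs: "sorted (sorted_abs x)"
  by (simp add: sorted_abs_def)

lemma mset_sorted_abs: "mset (sorted_abs x) = abs_mset x"
  by (simp add: sorted_abs_def)

lemma length_sorted_abs:
  fixes x :: "real^'n"
  shows "length (sorted_abs x) = CARD('n)"
  by (metis mset_sorted_abs size_mset abs_mset_def size_image_mset size_mset_set)

lemma set_sorted_abs: "set (sorted_abs x) = range (\<lambda>i. \<bar>x $ i\<bar>)"
  by (simp flip: set_mset_mset add: mset_sorted_abs abs_mset_def)

lemma count_list_sorted_abs_0:
  fixes x :: "real^'n"
  shows "count_list (sorted_abs x) 0 = CARD('n) - card {i. x $ i \<noteq> 0}"
proof -
  have "count_list (sorted_abs x) 0 = card {i. x $ i = 0}"
    by (simp add: count_mset[symmetric] mset_sorted_abs abs_mset_def count_image_mset vimage_def)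
  also have "\<dots> = card (UNIV - {i. x $ i \<noteq> 0})"
    by (rule arg_cong[where f = card]) auto
  finally show ?thesis by (simp add: card_Diff_subset)
qed

lemma sorted_abs_nth_eq_0_iff:
  fixes x :: "real^'n"
  shows "k < CARD('n) \<Longrightarrow> sorted_abs x ! k = 0 \<longleftrightarrow> k + card {i. x $ i \<noteq> 0} < CARD('n)"
  using sorted_nth_eq_lower_bound_iff[of "sorted_abs x" 0 k]
  by (auto simp: sorted_sorted_abs set_sorted_abs length_sorted_abs count_list_sorted_abs_0)

lemma trimmed_l1_eq_0:
  fixes x :: "real^'n"
  assumes "card {i. x $ i \<noteq> 0} \<le> K"
  shows "trimmed_l1 K x = 0"
proof -
  have "u = 0" if "u \<in> set (take (CARD('n) - K) (sorted_abs x))" for u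
    using that assms by (auto simp: in_set_conv_nth length_sorted_abs sorted_abs_nth_eq_0_iff)
  then show ?thesis
    unfolding trimmed_l1_sorted_abs by (subst sum_list_nonneg_eq_0_iff) auto
qed

lemma abs_mset_add_axis:
  fixes x :: "real^'n"
  shows "abs_mset (x + c *\<^sub>R axis i 1) = add_mset \<bar>x $ i + c\<bar> (abs_mset x - {#\<bar>x $ i\<bar>#})"
proof -
  have UNIV_eq: "mset_set (UNIV :: 'n set) = add_mset i (mset_set (UNIV - {i}))"
    by (rule mset_set.remove) auto
  have "image_mset (\<lambda>k. \<bar>(x + c *\<^sub>R axis i 1) $ k\<bar>) (mset_set (UNIV - {i}))
      = image_mset (\<lambda>k. \<bar>x $ k\<bar>) (mset_set (UNIV - {i}))"
    by (rule image_mset_cong) (simp add: axis_def)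
  then show ?thesis
    unfolding abs_mset_def UNIV_eq by (simp add: axis_def)
qed

lemma sorted_abs_add_axis:
  fixes x :: "real^'n"
  assumes "\<bar>x $ i\<bar> = sorted_abs x ! z" "z < CARD('n)"
    and "\<forall>k<z. sorted_abs x ! k \<le> \<bar>x $ i + c\<bar>" "\<bar>x $ i + c\<bar> \<le> \<bar>x $ i\<bar>"
  shows "sorted_abs (x + c *\<^sub>R axis i 1) = (sorted_abs x)[z := \<bar>x $ i + c\<bar>]"
proof -
  have "abs_mset (x + c *\<^sub>R axis i 1) = mset ((sorted_abs x)[z := \<bar>x $ i + c\<bar>])"
    using assms(1,2) by (simp add: abs_mset_add_axis mset_update length_sorted_abs mset_sorted_abs)
  moreover have "sorted ((sorted_abs x)[z := \<bar>x $ i + c\<bar>])"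
    using assms by (intro sorted_list_update sorted_sorted_abs) auto
  ultimately show ?thesis
    by (simp add: sorted_abs_def sorted_sort_id)
qed

lemma trimmed_l1_shrink_smallest_nonzero:
  fixes x :: "real^'n"
  assumes "K < card {i. x $ i \<noteq> 0}"
  obtains i where "x $ i \<noteq> 0"
    and "\<And>t. 0 < t \<Longrightarrow> t < \<bar>x $ i\<bar> \<Longrightarrow>
      trimmed_l1 K (x + t *\<^sub>R (- sgn (x $ i)) *\<^sub>R axis i 1) = trimmed_l1 K x - t"
proof -
  define s where "s = sorted_abs x"
  define m where "m = CARD('n) - K"
  \<comment> \<open>exactly z of the |x_i| vanish, so s ! z is the smallest nonzero one\<close>
  define z where "z = CARD('n) - card {i. x $ i \<noteq> 0}"
  have card_le: "card {i. x $ i \<noteq> 0} \<le> CARD('n)"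
    by (rule card_mono) auto
  then have "z < m" "m \<le> length s"
    using assms by (auto simp: z_def m_def s_def length_sorted_abs)
  have zero_iff: "s ! k = 0 \<longleftrightarrow> k < z" if "k < length s" for k
    using that card_le by (auto simp: s_def z_def sorted_abs_nth_eq_0_iff length_sorted_abs)
  then have zeros: "\<forall>k<z. s ! k = 0" and "s ! z \<noteq> 0"
    using \<open>z < m\<close> \<open>m \<le> length s\<close> by auto
  moreover have "s ! z \<in> set s"
    using \<open>z < m\<close> \<open>m \<le> length s\<close> by simp
  ultimately obtain i where i: "\<bar>x $ i\<bar> = s ! z" "x $ i \<noteq> 0"
    by (auto simp: s_def set_sorted_abs)
  have "trimmed_l1 K (x + t *\<^sub>R (- sgn (x $ i)) *\<^sub>R axis i 1) = trimmed_l1 K x - t"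
    if t: "0 < t" "t < \<bar>x $ i\<bar>" for t
  proof -
    have "\<bar>x $ i - t * sgn (x $ i)\<bar> = \<bar>x $ i\<bar> - t"
      using t by (cases "x $ i > 0") (auto simp: sgn_if)
    then have "sorted_abs (x + t *\<^sub>R (- sgn (x $ i)) *\<^sub>R axis i 1) = s[z := \<bar>x $ i\<bar> - t]"
      using sorted_abs_add_axis[of x i z "- t * sgn (x $ i)"] i t zeros \<open>z < m\<close> \<open>m \<le> length s\<close>
      by (simp add: s_def length_sorted_abs)
    then show ?thesis
      using i \<open>z < m\<close> \<open>m \<le> length s\<close>
      by (simp add: trimmed_l1_sorted_abs m_def s_def take_update_swap sum_list_list_update)
  qed
  with i show ?thesis
    using that by blast
qed

lemma ln_one_plus_exp_diff_le:
  fixes u v :: real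
  shows "ln (1 + exp u) - ln (1 + exp v) \<le> \<bar>u - v\<bar>"
proof -
  have pos: "0 < 1 + exp v"
    using exp_gt_zero[of v] by linarith
  have "1 \<le> exp \<bar>u - v\<bar>" "exp u \<le> exp \<bar>u - v\<bar> * exp v"
    by (simp_all flip: exp_add)
  then have "1 + exp u \<le> exp \<bar>u - v\<bar> * (1 + exp v)"
    unfolding distrib_left mult_1_right by (rule add_mono)
  then have "ln (1 + exp u) \<le> ln (exp \<bar>u - v\<bar> * (1 + exp v))"
    by (rule ln_mono) (use exp_gt_zero[of u] in linarith)
  also have "\<dots> = \<bar>u - v\<bar> + ln (1 + exp v)"
    using pos by (simp add: ln_mult)
  finally show ?thesis by simp
qed

lemma logistic_loss_diff_le:
  fixes a :: "'i \<Rightarrow> 'a::real_inner"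
  assumes "\<forall>j\<in>J. b j \<in> {-1, 1}"
  shows "(\<Sum>j\<in>J. ln (1 + exp (- b j * (a j \<bullet> y))))
      - (\<Sum>j\<in>J. ln (1 + exp (- b j * (a j \<bullet> x)))) \<le> (\<Sum>j\<in>J. \<bar>a j \<bullet> (y - x)\<bar>)"
  unfolding sum_subtractf[symmetric]
proof (rule sum_mono)
  fix j assume "j \<in> J"
  then have "\<bar>- b j * (a j \<bullet> y) - - b j * (a j \<bullet> x)\<bar> = \<bar>a j \<bullet> (y - x)\<bar>"
    using assms by (auto simp: inner_diff_right algebra_simps)
  then show "ln (1 + exp (- b j * (a j \<bullet> y))) - ln (1 + exp (- b j * (a j \<bullet> x)))
      \<le> \<bar>a j \<bullet> (y - x)\<bar>"
    by (metis ln_one_plus_exp_diff_le)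
qed

lemma logistic_loss_coordinate_step_le:
  fixes a :: "'j \<Rightarrow> real^'n"
  assumes "\<forall>j\<in>J. b j \<in> {-1, 1}" "0 \<le> t" "\<bar>\<sigma>\<bar> \<le> 1"
  shows "(\<Sum>j\<in>J. ln (1 + exp (- b j * (a j \<bullet> (x + t *\<^sub>R \<sigma> *\<^sub>R axis i 1)))))
      - (\<Sum>j\<in>J. ln (1 + exp (- b j * (a j \<bullet> x)))) \<le> t * (\<Sum>j\<in>J. infnorm (a j))"
proof -
  have "(\<Sum>j\<in>J. ln (1 + exp (- b j * (a j \<bullet> (x + t *\<^sub>R \<sigma> *\<^sub>R axis i 1)))))
      - (\<Sum>j\<in>J. ln (1 + exp (- b j * (a j \<bullet> x))))
      \<le> (\<Sum>j\<in>J. \<bar>a j \<bullet> (x + t *\<^sub>R \<sigma> *\<^sub>R axis i 1 - x)\<bar>)"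
    by (rule logistic_loss_diff_le[OF assms(1)])
  also have "\<dots> = (\<Sum>j\<in>J. t * (\<bar>\<sigma>\<bar> * \<bar>a j $ i\<bar>))"
    using assms(2) by (simp add: inner_axis abs_mult mult.assoc)
  also have "\<dots> \<le> (\<Sum>j\<in>J. t * infnorm (a j))"
  proof (intro sum_mono mult_left_mono)
    fix j
    have "\<bar>\<sigma>\<bar> * \<bar>a j $ i\<bar> \<le> \<bar>a j $ i\<bar>"
      using assms(3) by (simp add: mult_left_le_one_le)
    then show "\<bar>\<sigma>\<bar> * \<bar>a j $ i\<bar> \<le> infnorm (a j)"
      using component_le_infnorm_cart[of "a j" i] by linarith
  qed (use assms(2) in simp)
  finally show ?thesis
    by (simp add: sum_distrib_left)
qed

lemma d_stationary_difference_quotient_bound: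
  assumes "d_stationary f x"
    and "\<forall>\<^sub>F t in at_right 0. (f (x + t *\<^sub>R d) - f x) / t \<le> c"
  shows "0 \<le> c"
proof -
  obtain L where "has_dir_deriv f x d L" "0 \<le> L"
    using assms(1) unfolding d_stationary_def by blast
  moreover have "L \<le> c"
    using \<open>has_dir_deriv f x d L\<close> unfolding has_dir_deriv_def
    by (rule tendsto_upperbound[OF _ assms(2)]) simp
  ultimately show ?thesis by linarith
qed

theorem mainTheorem8:
  fixes a :: "nat \<Rightarrow> real^'n" and b :: "nat \<Rightarrow> real" and q K :: nat
    and \<gamma> :: real and xs :: "real^'n"
  assumes "\<forall>j\<in>{1..q}. b j \<in> {-1, 1}"
    and "K < CARD('n)"
    and "\<gamma> > 0"
    and "d_stationary (\<lambda>x. (\<Sum>j\<in>{1..q}. ln (1 + exp (- b j * (a j \<bullet> x)))) + \<gamma> * trimmed_l1 K x) xs"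
    and "\<gamma> > (\<Sum>j\<in>{1..q}. infnorm (a j))"
  shows "trimmed_l1 K xs = 0 \<and> card {i. xs $ i \<noteq> 0} \<le> K"
proof -
  let ?L = "\<lambda>x. \<Sum>j\<in>{1..q}. ln (1 + exp (- b j * (a j \<bullet> x)))"
  let ?F = "\<lambda>x. ?L x + \<gamma> * trimmed_l1 K x"
  let ?S = "\<Sum>j\<in>{1..q}. infnorm (a j)"
  have "card {i. xs $ i \<noteq> 0} \<le> K"
  proof (rule ccontr)
    assume "\<not> card {i. xs $ i \<noteq> 0} \<le> K"
    then obtain i where "xs $ i \<noteq> 0" and shrink: "\<And>t. 0 < t \<Longrightarrow> t < \<bar>xs $ i\<bar> \<Longrightarrow>
        trimmed_l1 K (xs + t *\<^sub>R (- sgn (xs $ i)) *\<^sub>R axis i 1) = trimmed_l1 K xs - t"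
      using trimmed_l1_shrink_smallest_nonzero not_le by blast
    let ?d = "(- sgn (xs $ i)) *\<^sub>R axis i (1::real)"
    have "(?F (xs + t *\<^sub>R ?d) - ?F xs) / t \<le> ?S - \<gamma>" if "0 < t" "t < \<bar>xs $ i\<bar>" for t
    proof -
      have "?L (xs + t *\<^sub>R ?d) - ?L xs \<le> t * ?S"
        using that by (intro logistic_loss_coordinate_step_le assms(1)) (simp_all add: abs_sgn_eq)
      then have "?F (xs + t *\<^sub>R ?d) - ?F xs \<le> t * (?S - \<gamma>)"
        unfolding shrink[OF that] by (simp add: algebra_simps)
      then show ?thesis
        using \<open>0 < t\<close> by (simp add: pos_divide_le_eq mult.commute)
    qed
    then have "\<forall>\<^sub>F t in at_right 0. (?F (xs + t *\<^sub>R ?d) - ?F xs) / t \<le> ?S - \<gamma>"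
      using eventually_at_right_real[of 0 "\<bar>xs $ i\<bar>"] \<open>xs $ i \<noteq> 0\<close>
      by (auto elim!: eventually_mono)
    with assms(4) have "0 \<le> ?S - \<gamma>"
      by (rule d_stationary_difference_quotient_bound)
    with assms(5) show False by linarith
  qed
  then show ?thesis
    using trimmed_l1_eq_0 by blast
qed

end
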